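(* Let $T$ be a hedge of height $H$, let $C\in\mathcal R(P_{H+1})$ and let $A\in\mathcal{PH}(C,T)$. For $i=1,\dots,H+1$ let $C_i:=C[\{H-i+2,\dots,H+1\}]$ be the trailing $i\times i$ principal submatrix of $C$. Then, as multisets, $$\sigma(A)=\bigcup_{i=1}^{H+1}\ell_i(T)\,\sigma(C_i).$$
   Context: Rooted trees, children, leaves: a rooted tree is a tree with a distinguished root; $y$ is a child of adjacent $z$ if the root-to-$y$ path passes through $z$; in a rooted tree with at least two vertices a leaf is a non-root vertex of degree 1, and in $P_1$ the single vertex is root and leaf. A hedge is a rooted tree which is $P_1$ or in which all leaves are at the same distance from the root. The height $\mathrm{h}(u)$ of a vertex is its distance to a nearest leaf; the height of the hedge is the height of the root. $V_i(T)$ is the set of vertices of height $i$, and $\ell_i(T):=|V_{i-1}(T)|-|V_i(T)|$ for $i\ge1$. $P_n$ is the path $1-2-\cdots-n$, viewed as a hedge of height $n-1$ rooted at vertex $1$ (so vertex $j$ has height $n-j$). $\mathcal R(T)$: real matrices indexed by $V(T)$ with $a_{ij}\ne0$ iff $\{i,j\}\in E(T)$ for $i\ne j$, and $a_{ij}a_{ji}>0$ on edges; diagonal arbitrary. $A[U]$ is the principal submatrix on $U$. Multiset union adds multiplicities; $s\Lambda$ multiplies multiplicities by $s$. Path-to-hedge construction: for a hedge $T$ of height $H$ and $C=(c_{ij})\in\mathcal R(P_{H+1})$, for $v\in V(T)$ let $v'=H+1-\mathrm{h}(v)$ be the vertex of $P_{H+1}$ of the same height. $\mathcal{PH}(C,T)$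 is the set of $A=(a_{uv})\in\mathcal R(T)$ such that $a_{vv}=c_{v'v'}$ for every vertex $v$, and for every non-leaf vertex $v$, $\sum_{u\text{ child of }v}a_{vu}a_{uv}=c_{v',v'+1}\,c_{v'+1,v'}$. *)

theory Defs
  imports Complex_Main "HOL-Library.Multiset" "HOL-Computational_Algebra.Polynomial"
    "HOL-Combinatorics.Permutations"
begin

definition graph_edges :: "'a set \<Rightarrow> ('a \<Rightarrow> 'a \<Rightarrow> bool) \<Rightarrow> 'a set set" where
  "graph_edges V adj = {{u, v} | u v. u \<in> V \<and> v \<in> V \<and> adj u v}"

definition is_graph :: "'a set \<Rightarrow> ('a \<Rightarrow> 'a \<Rightarrow> bool) \<Rightarrow> bool" where
  "is_graph V adj \<longleftrightarrow> finite V \<and> V \<noteq> {} \<and> (\<forall>u v. adj u v \<longrightarrow> u \<in> V \<and> v \<in> V)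
     \<and> (\<forall>u v. adj u v \<longrightarrow> adj v u) \<and> (\<forall>u. \<not> adj u u)"

definition walk_len :: "('a \<Rightarrow> 'a \<Rightarrow> bool) \<Rightarrow> nat \<Rightarrow> 'a \<Rightarrow> 'a \<Rightarrow> bool" where
  "walk_len adj n u v = (adj ^^ n) u v"

definition connected_graph :: "'a set \<Rightarrow> ('a \<Rightarrow> 'a \<Rightarrow> bool) \<Rightarrow> bool" where
  "connected_graph V adj \<longleftrightarrow> (\<forall>u\<in>V. \<forall>v\<in>V. \<exists>n. walk_len adj n u v)"

text \<open>A tree: a connected graph with |E| = |V| - 1 (equivalently, connected and acyclic).\<close>
definition is_tree :: "'a set \<Rightarrow> ('a \<Rightarrow> 'a \<Rightarrow> bool) \<Rightarrow> bool" where
  "is_tree V adj \<longleftrightarrow> is_graph V adj \<and> connected_graph V adj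
     \<and> card (graph_edges V adj) + 1 = card V"

definition gdist :: "('a \<Rightarrow> 'a \<Rightarrow> bool) \<Rightarrow> 'a \<Rightarrow> 'a \<Rightarrow> nat" where
  "gdist adj u v = (LEAST n. walk_len adj n u v)"

definition degree :: "'a set \<Rightarrow> ('a \<Rightarrow> 'a \<Rightarrow> bool) \<Rightarrow> 'a \<Rightarrow> nat" where
  "degree V adj v = card {u \<in> V. adj v u}"

text \<open>y is a child of z: y is adjacent to z and the root-to-y path passes through z
  (in a tree: d(r,y) = d(r,z) + d(z,y)).\<close>
definition is_child :: "('a \<Rightarrow> 'a \<Rightarrow> bool) \<Rightarrow> 'a \<Rightarrow> 'a \<Rightarrow> 'a \<Rightarrow> bool" where
  "is_child adj r y z \<longleftrightarrow> adj y z \<and> gdist adj r y = gdist adj r z + gdist adj z y"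

definition is_leaf :: "'a set \<Rightarrow> ('a \<Rightarrow> 'a \<Rightarrow> bool) \<Rightarrow> 'a \<Rightarrow> 'a \<Rightarrow> bool" where
  "is_leaf V adj r v \<longleftrightarrow>
     (if V = {r} then v = r else v \<in> V \<and> v \<noteq> r \<and> degree V adj v = 1)"

definition is_hedge :: "'a set \<Rightarrow> ('a \<Rightarrow> 'a \<Rightarrow> bool) \<Rightarrow> 'a \<Rightarrow> bool" where
  "is_hedge V adj r \<longleftrightarrow> is_tree V adj \<and> r \<in> V \<and>
     (V = {r} \<or> (\<forall>u v. is_leaf V adj r u \<and> is_leaf V adj r v \<longrightarrow> gdist adj r u = gdist adj r v))"

definition vheight :: "'a set \<Rightarrow> ('a \<Rightarrow> 'a \<Rightarrow> bool) \<Rightarrow> 'a \<Rightarrow> 'a \<Rightarrow> nat" where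
  "vheight V adj r u = Min {gdist adj u w | w. is_leaf V adj r w}"

definition level_set :: "'a set \<Rightarrow> ('a \<Rightarrow> 'a \<Rightarrow> bool) \<Rightarrow> 'a \<Rightarrow> nat \<Rightarrow> 'a set" where
  "level_set V adj r i = {v \<in> V. vheight V adj r v = i}"

text \<open>ell_i(T) = |V_{i-1}| - |V_i| for i >= 1 (as an integer; it is nonnegative for hedges).\<close>
definition ell :: "'a set \<Rightarrow> ('a \<Rightarrow> 'a \<Rightarrow> bool) \<Rightarrow> 'a \<Rightarrow> nat \<Rightarrow> int" where
  "ell V adj r i = int (card (level_set V adj r (i - 1))) - int (card (level_set V adj r i))"

definition in_R :: "'a set \<Rightarrow> ('a \<Rightarrow> 'a \<Rightarrow> bool) \<Rightarrow> ('a \<Rightarrow> 'a \<Rightarrow> real) \<Rightarrow> bool" where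
  "in_R V adj A \<longleftrightarrow>
     (\<forall>i\<in>V. \<forall>j\<in>V. i \<noteq> j \<longrightarrow> (A i j \<noteq> 0 \<longleftrightarrow> adj i j)) \<and>
     (\<forall>i\<in>V. \<forall>j\<in>V. adj i j \<longrightarrow> A i j * A j i > 0)"

text \<open>Characteristic polynomial det(xI - A[U]) of the principal submatrix on a finite index
  set U, via the Leibniz formula for the determinant.\<close>
definition charpoly :: "'a set \<Rightarrow> ('a \<Rightarrow> 'a \<Rightarrow> real) \<Rightarrow> real poly" where
  "charpoly U A = (\<Sum>p | p permutes U. of_int (sign p) *
      (\<Prod>i\<in>U. (if p i = i then [:- A i i, 1:] else [:- A i (p i):])))"

definition spectrum_ms :: "'a set \<Rightarrow> ('a \<Rightarrow> 'a \<Rightarrow> real) \<Rightarrow> complex multiset" where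
  "spectrum_ms U A = proots (map_poly complex_of_real (charpoly U A))"

definition path_adj :: "nat \<Rightarrow> nat \<Rightarrow> bool" where
  "path_adj i j \<longleftrightarrow> i = j + 1 \<or> j = i + 1"

definition path_verts :: "nat \<Rightarrow> nat set" where
  "path_verts n = {1..n}"

definition PH :: "'a set \<Rightarrow> ('a \<Rightarrow> 'a \<Rightarrow> bool) \<Rightarrow> 'a \<Rightarrow> (nat \<Rightarrow> nat \<Rightarrow> real)
                   \<Rightarrow> ('a \<Rightarrow> 'a \<Rightarrow> real) set" where
  "PH V adj r C =
    (let H = vheight V adj r r; pr = (\<lambda>v. H + 1 - vheight V adj r v) in
     {A. in_R V adj A \<and>
         (\<forall>v\<in>V. A v v = C (pr v) (pr v)) \<and>
         (\<forall>v\<in>V. \<not> is_leaf V adj r v \<longrightarrow>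
            (\<Sum>u | u \<in> V \<and> is_child adj r u v. A v u * A u v)
              = C (pr v) (pr v + 1) * C (pr v + 1) (pr v))})"

end

theory Submission
  imports Defs
begin

text \<open>Write d(v) for the depth of a vertex and P k for the characteristic polynomial of the trailing
  block C[{k+1..H+1}]. The PH conditions say that a vertex of depth k sees the diagonal entry of row
  k+1 of C and that the products A v u * A u v over its children add up to the corresponding
  product on the path. Expanding det(xI - A) along the edge from a child's subtree to its parent
  therefore gives, by induction from the leaves upwards,
  charpoly (T u) * P (d u + 1) = P (d u) * \<Prod>c. charpoly (T c) for every subtree T u.
  Multiplying these relations over all vertices telescopes to
  charpoly A * \<Prod>v. P (d v + 1) = \<Prod>v. P (d v). Taking roots and grouping vertices by height,
  the spectrum of C_i enters |V_(i-1)| times on the right and |V_i| times on the left, which leaves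
  \<ell>_i(T) copies in the spectrum of A.\<close>

section \<open>Expanding a characteristic polynomial along one edge\<close>

definition charmat_entry :: "('a \<Rightarrow> 'a \<Rightarrow> real) \<Rightarrow> 'a \<Rightarrow> 'a \<Rightarrow> real poly" where
  "charmat_entry A i j = (if j = i then [:- A i i, 1:] else [:- A i j:])"

definition leibniz_term :: "'a set \<Rightarrow> ('a \<Rightarrow> 'a \<Rightarrow> real) \<Rightarrow> ('a \<Rightarrow> 'a) \<Rightarrow> real poly" where
  "leibniz_term U A p = of_int (sign p) * (\<Prod>i\<in>U. charmat_entry A i (p i))"

lemma charpoly_eq_sum_leibniz_term: "charpoly U A = (\<Sum>p | p permutes U. leibniz_term U A p)"
  unfolding charpoly_def leibniz_term_def charmat_entry_def by simp

lemma charpoly_empty [simp]: "charpoly {} A = 1"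
  by (simp add: charpoly_def)

lemma charpoly_singleton: "charpoly {v} A = [:- A v v, 1:]"
  by (simp add: charpoly_def)

lemma leibniz_term_nonzero_entry:
  assumes "leibniz_term U A p \<noteq> 0" "finite U" "i \<in> U" "p i \<noteq> i"
  shows "A i (p i) \<noteq> 0"
proof -
  have "charmat_entry A i (p i) \<noteq> 0"
    using assms(1-3) unfolding leibniz_term_def by (auto simp: prod_zero_iff)
  then show ?thesis
    using assms(4) unfolding charmat_entry_def by (auto simp: pCons_eq_0_iff)
qed

definition block_perms :: "'a set \<Rightarrow> 'a set \<Rightarrow> ('a \<Rightarrow> 'a) set" where
  "block_perms W1 W2 = (\<lambda>(p1, p2). p1 \<circ> p2) ` ({p. p permutes W1} \<times> {p. p permutes W2})"

lemma compose_disjoint_permutes_apply: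
  assumes "W1 \<inter> W2 = {}" "p1 permutes W1" "p2 permutes W2"
  shows "i \<in> W1 \<Longrightarrow> (p1 \<circ> p2) i = p1 i" and "i \<in> W2 \<Longrightarrow> (p1 \<circ> p2) i = p2 i"
proof -
  show "(p1 \<circ> p2) i = p1 i" if "i \<in> W1"
  proof -
    have "i \<notin> W2" using that assms(1) by blast
    then show ?thesis using permutes_not_in[OF assms(3)] by simp
  qed
  show "(p1 \<circ> p2) i = p2 i" if "i \<in> W2"
  proof -
    have "p2 i \<notin> W1" using that assms(1) permutes_in_image[OF assms(3)] by blast
    then show ?thesis using permutes_not_in[OF assms(2)] by simp
  qed
qed

lemma inj_on_compose_disjoint_permutes:
  assumes "W1 \<inter> W2 = {}"
  shows "inj_on (\<lambda>(p1, p2). p1 \<circ> p2) ({p. p permutes W1} \<times> {p. p permutes W2})"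
proof (rule inj_onI, clarsimp)
  fix p1 p2 q1 q2
  assume p: "p1 permutes W1" "p2 permutes W2" and q: "q1 permutes W1" "q2 permutes W2"
    and eq: "p1 \<circ> p2 = q1 \<circ> q2"
  note ap = compose_disjoint_permutes_apply[OF assms p] and aq = compose_disjoint_permutes_apply[OF assms q]
  have "p1 x = q1 x" for x
    using ap(1)[of x] aq(1)[of x] eq permutes_not_in[OF p(1)] permutes_not_in[OF q(1)]
    by (cases "x \<in> W1") auto
  moreover have "p2 x = q2 x" for x
    using ap(2)[of x] aq(2)[of x] eq permutes_not_in[OF p(2)] permutes_not_in[OF q(2)]
    by (cases "x \<in> W2") auto
  ultimately show "p1 = q1 \<and> p2 = q2" by auto
qed

lemma mem_block_perms_iff:
  assumes "finite W1" "finite W2" "W1 \<inter> W2 = {}"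
  shows "q \<in> block_perms W1 W2 \<longleftrightarrow> q permutes (W1 \<union> W2) \<and> q ` W1 \<subseteq> W1"
proof
  assume "q \<in> block_perms W1 W2"
  then obtain p1 p2 where p: "p1 permutes W1" "p2 permutes W2" and q: "q = p1 \<circ> p2"
    unfolding block_perms_def by auto
  have "q permutes (W1 \<union> W2)"
    unfolding q by (rule permutes_compose[OF permutes_subset[OF p(2)] permutes_subset[OF p(1)]]) auto
  moreover have "q ` W1 \<subseteq> W1"
    using compose_disjoint_permutes_apply(1)[OF assms(3) p] permutes_in_image[OF p(1)] q by auto
  ultimately show "q permutes (W1 \<union> W2) \<and> q ` W1 \<subseteq> W1" ..
next
  assume q: "q permutes (W1 \<union> W2) \<and> q ` W1 \<subseteq> W1"
  have inj: "inj_on q (W1 \<union> W2)" using q permutes_inj_on by blast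
  have im1: "q ` W1 = W1"
    using endo_inj_surj[OF assms(1)] q inj_on_subset[OF inj] by blast
  have "q ` W2 = q ` (W1 \<union> W2) - q ` W1"
    using inj assms(3) by (auto simp: inj_on_def)
  then have im2: "q ` W2 = W2" using im1 permutes_image[of q] q assms(3) by auto
  have b1: "bij_betw q W1 W1" and b2: "bij_betw q W2 W2"
    using im1 im2 inj by (auto simp: bij_betw_def intro: inj_on_subset)
  have "q = restrict_id q W1 \<circ> restrict_id q W2"
  proof
    fix x show "q x = (restrict_id q W1 \<circ> restrict_id q W2) x"
    proof (cases "x \<in> W2")
      case True
      then have "q x \<in> W2" using im2 by auto
      then have "q x \<notin> W1" using assms(3) by blast
      then show ?thesis using True by simp
    next
      case False
      then show ?thesis using permutes_not_in[of q] q by (cases "x \<in> W1") auto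
    qed
  qed
  then show "q \<in> block_perms W1 W2"
    unfolding block_perms_def using permutes_restrict_id[OF b1] permutes_restrict_id[OF b2]
    by (auto intro!: image_eqI[where x = "(restrict_id q W1, restrict_id q W2)"])
qed

lemma leibniz_term_compose:
  assumes "finite W1" "finite W2" "W1 \<inter> W2 = {}" "p1 permutes W1" "p2 permutes W2"
  shows "leibniz_term (W1 \<union> W2) A (p1 \<circ> p2) = leibniz_term W1 A p1 * leibniz_term W2 A p2"
proof -
  have sign: "sign (p1 \<circ> p2) = sign p1 * sign p2"
    using sign_compose permutes_imp_permutation assms by blast
  have "(\<Prod>i\<in>W1 \<union> W2. charmat_entry A i ((p1 \<circ> p2) i)) =
     (\<Prod>i\<in>W1. charmat_entry A i ((p1 \<circ> p2) i)) * (\<Prod>i\<in>W2. charmat_entry A i ((p1 \<circ> p2) i))"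
    using assms(1-3) by (rule prod.union_disjoint)
  also have "\<dots> = (\<Prod>i\<in>W1. charmat_entry A i (p1 i)) * (\<Prod>i\<in>W2. charmat_entry A i (p2 i))"
    using compose_disjoint_permutes_apply[OF assms(3-5)] by simp
  finally show ?thesis unfolding leibniz_term_def sign by (simp add: mult_ac)
qed

lemma charpoly_mult_eq_sum_block_perms:
  assumes "finite W1" "finite W2" "W1 \<inter> W2 = {}"
  shows "charpoly W1 A * charpoly W2 A = sum (leibniz_term (W1 \<union> W2) A) (block_perms W1 W2)"
proof -
  have "charpoly W1 A * charpoly W2 A =
      (\<Sum>(p1, p2)\<in>{p. p permutes W1} \<times> {p. p permutes W2}. leibniz_term W1 A p1 * leibniz_term W2 A p2)"
    unfolding charpoly_eq_sum_leibniz_term sum_product sum.cartesian_product ..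
  also have "\<dots> = (\<Sum>(p1, p2)\<in>{p. p permutes W1} \<times> {p. p permutes W2}. leibniz_term (W1 \<union> W2) A (p1 \<circ> p2))"
    by (rule sum.cong) (use leibniz_term_compose[OF assms] in auto)
  also have "\<dots> = sum (leibniz_term (W1 \<union> W2) A) (block_perms W1 W2)"
    unfolding block_perms_def sum.reindex[OF inj_on_compose_disjoint_permutes[OF assms(3)]]
    by (rule sum.cong) auto
  finally show ?thesis .
qed

lemma leibniz_term_transpose_compose:
  assumes "finite W" "a \<notin> W" "b \<notin> W" "a \<noteq> b" "q permutes W"
  shows "leibniz_term (insert a (insert b W)) A (transpose a b \<circ> q) = - [:A a b * A b a:] * leibniz_term W A q"
proof -
  have sign: "sign (transpose a b \<circ> q) = - sign q"
    using sign_compose[OF permutation_swap_id permutes_imp_permutation[OF assms(1,5)]] assms(4)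
    by (simp add: sign_swap_id)
  have qa: "q a = a" and qb: "q b = b" using permutes_not_in[OF assms(5)] assms(2,3) by auto
  have "(transpose a b \<circ> q) i = q i" if "i \<in> W" for i
    using permutes_in_image[OF assms(5)] that assms(2,3) by (auto simp: transpose_def)
  then have "(\<Prod>i\<in>insert a (insert b W). charmat_entry A i ((transpose a b \<circ> q) i)) =
      charmat_entry A a b * charmat_entry A b a * (\<Prod>i\<in>W. charmat_entry A i (q i))"
    using assms(1-4) qa qb by (simp add: mult.assoc)
  also have "charmat_entry A a b * charmat_entry A b a = [:A a b * A b a:]"
    using assms(4) by (simp add: charmat_entry_def)
  finally show ?thesis unfolding leibniz_term_def sign by simp
qed

lemma permutes_single_crossing_cases:
  assumes fin: "finite U1" "finite U2" and disj: "U1 \<inter> U2 = {}" and ab: "a \<in> U1" "b \<in> U2"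
    and p: "p permutes (U1 \<union> U2)"
    and cross1: "\<And>i. i \<in> U1 \<Longrightarrow> p i \<in> U2 \<Longrightarrow> i = a \<and> p i = b"
    and cross2: "\<And>j. j \<in> U2 \<Longrightarrow> p j \<in> U1 \<Longrightarrow> j = b \<and> p j = a"
  shows "p \<in> block_perms U1 U2 \<or> transpose a b \<circ> p \<in> block_perms (U1 - {a}) (U2 - {b})"
proof (cases "p a \<in> U1")
  case True
  have "p i \<in> U1" if "i \<in> U1" for i
    using that True cross1 permutes_in_image[OF p] by (metis Un_iff)
  then show ?thesis using mem_block_perms_iff[OF fin disj] p by blast
next
  case False
  have inj: "inj p" using permutes_inj[OF p] .
  have pa: "p a = b" using False cross1 ab permutes_in_image[OF p] by (metis Un_iff)
  have "\<not> p ` U2 \<subseteq> U2"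
  proof
    assume "p ` U2 \<subseteq> U2"
    then have "p ` U2 = U2" using endo_inj_surj[OF fin(2)] inj inj_on_subset by blast
    then obtain j where "j \<in> U2" "p j = b" using ab(2) by (metis imageE)
    then show False using pa inj ab(1) disj by (metis disjoint_iff injD)
  qed
  then obtain j where "j \<in> U2" "p j \<in> U1" using permutes_in_image[OF p] by (metis Un_iff image_subsetI)
  then have pb: "p b = a" using cross2 by blast
  define q where "q = transpose a b \<circ> p"
  have qa: "q a = a" and qb: "q b = b" unfolding q_def using pa pb by simp_all
  have "q permutes (U1 \<union> U2)"
    unfolding q_def using permutes_compose[OF p permutes_swap_id] ab by blast
  then have "q permutes ((U1 - {a}) \<union> (U2 - {b}))"
    by (rule permutes_superset) (use qa qb in auto)
  moreover have "q i \<in> U1 - {a}" if i: "i \<in> U1 - {a}" for i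
  proof -
    have "p i \<in> U1" using cross1 i permutes_in_image[OF p] by (metis DiffE Un_iff insertI1)
    moreover have "p i \<noteq> a" using pb inj i ab disj by (metis DiffD1 disjoint_iff injD)
    moreover have "p i \<noteq> b" using \<open>p i \<in> U1\<close> ab(2) disj by blast
    ultimately show ?thesis unfolding q_def by simp
  qed
  ultimately have "q \<in> block_perms (U1 - {a}) (U2 - {b})"
    using mem_block_perms_iff[of "U1 - {a}" "U2 - {b}"] fin disj by blast
  then show ?thesis unfolding q_def by blast
qed

lemma nonzero_leibniz_term_cases:
  assumes fin: "finite U1" "finite U2" and disj: "U1 \<inter> U2 = {}" and ab: "a \<in> U1" "b \<in> U2"
    and zero: "\<And>i j. i \<in> U1 \<Longrightarrow> j \<in> U2 \<Longrightarrow> (i, j) \<noteq> (a, b) \<Longrightarrow> A i j = 0 \<and> A j i = 0"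
    and p: "p permutes (U1 \<union> U2)" and nz: "leibniz_term (U1 \<union> U2) A p \<noteq> 0"
  shows "p \<in> block_perms U1 U2 \<or> transpose a b \<circ> p \<in> block_perms (U1 - {a}) (U2 - {b})"
proof (rule permutes_single_crossing_cases[OF fin disj ab p])
  have entry: "A i (p i) \<noteq> 0" if "i \<in> U1 \<union> U2" "p i \<noteq> i" for i
    using leibniz_term_nonzero_entry[OF nz _ that] fin by blast
  show "i = a \<and> p i = b" if i: "i \<in> U1" "p i \<in> U2" for i
  proof -
    have "p i \<noteq> i" using i disj by auto
    then show ?thesis using zero[OF i] entry i(1) by blast
  qed
  show "j = b \<and> p j = a" if j: "j \<in> U2" "p j \<in> U1" for j
  proof -
    have "p j \<noteq> j" using j disj by auto
    then show ?thesis using zero[OF j(2,1)] entry j(1) by blast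
  qed
qed

lemma sum_leibniz_term_transpose_block_perms:
  assumes fin: "finite U1" "finite U2" and disj: "U1 \<inter> U2 = {}" and ab: "a \<in> U1" "b \<in> U2"
  shows "sum (leibniz_term (U1 \<union> U2) A) ((\<lambda>q. transpose a b \<circ> q) ` block_perms (U1 - {a}) (U2 - {b}))
    = - [:A a b * A b a:] * (charpoly (U1 - {a}) A * charpoly (U2 - {b}) A)"
proof -
  define U' S0 where "U' = (U1 - {a}) \<union> (U2 - {b})" and "S0 = block_perms (U1 - {a}) (U2 - {b})"
  have fin': "finite (U1 - {a})" "finite (U2 - {b})" "(U1 - {a}) \<inter> (U2 - {b}) = {}"
    using fin disj by auto
  have U': "U1 \<union> U2 = insert a (insert b U')" "a \<notin> U'" "b \<notin> U'" "finite U'" "a \<noteq> b"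
    using ab fin disj unfolding U'_def by auto
  have "inj_on (\<lambda>q. transpose a b \<circ> q) S0"
    by (rule inj_on_inverseI[of _ "\<lambda>q. transpose a b \<circ> q"]) (simp add: fun_eq_iff)
  then have "sum (leibniz_term (U1 \<union> U2) A) ((\<lambda>q. transpose a b \<circ> q) ` S0)
      = (\<Sum>q\<in>S0. leibniz_term (U1 \<union> U2) A (transpose a b \<circ> q))"
    by (simp add: sum.reindex)
  also have "\<dots> = (\<Sum>q\<in>S0. - [:A a b * A b a:] * leibniz_term U' A q)"
    using mem_block_perms_iff[OF fin'] leibniz_term_transpose_compose[OF U'(4,2,3,5)]
    unfolding U'(1) S0_def U'_def by (intro sum.cong) auto
  also have "\<dots> = - [:A a b * A b a:] * (charpoly (U1 - {a}) A * charpoly (U2 - {b}) A)"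
    unfolding sum_distrib_left[symmetric] S0_def U'_def charpoly_mult_eq_sum_block_perms[OF fin'] ..
  finally show ?thesis unfolding S0_def .
qed

lemma transpose_comp_block_perms:
  assumes fin: "finite U1" "finite U2" and disj: "U1 \<inter> U2 = {}" and ab: "a \<in> U1" "b \<in> U2"
    and q: "q \<in> block_perms (U1 - {a}) (U2 - {b})"
  shows "transpose a b \<circ> q permutes (U1 \<union> U2) \<and> (transpose a b \<circ> q) a = b"
proof -
  have q: "q permutes (U1 - {a}) \<union> (U2 - {b})"
    using q mem_block_perms_iff[of "U1 - {a}" "U2 - {b}"] fin disj by blast
  have "q permutes (U1 \<union> U2)" by (rule permutes_subset[OF q]) auto
  moreover have "transpose a b permutes (U1 \<union> U2)" using ab by (simp add: permutes_swap_id)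
  moreover have "q a = a" using permutes_not_in[OF q, of a] ab disj by blast
  ultimately show ?thesis using permutes_compose[of q "U1 \<union> U2" "transpose a b"] by simp
qed

lemma charpoly_union_edge:
  fixes A :: "'a \<Rightarrow> 'a \<Rightarrow> real"
  assumes fin: "finite U1" "finite U2" and disj: "U1 \<inter> U2 = {}" and ab: "a \<in> U1" "b \<in> U2"
    and zero: "\<And>i j. i \<in> U1 \<Longrightarrow> j \<in> U2 \<Longrightarrow> (i, j) \<noteq> (a, b) \<Longrightarrow> A i j = 0 \<and> A j i = 0"
  shows "charpoly (U1 \<union> U2) A = charpoly U1 A * charpoly U2 A
     - [:A a b * A b a:] * (charpoly (U1 - {a}) A * charpoly (U2 - {b}) A)"
proof -
  define U \<tau> where "U = U1 \<union> U2" and "\<tau> = transpose a b"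
  define S1 S2 where "S1 = block_perms U1 U2"
    and "S2 = (\<lambda>q. \<tau> \<circ> q) ` block_perms (U1 - {a}) (U2 - {b})"
  have finU: "finite {p. p permutes U}" using fin unfolding U_def by (simp add: finite_permutations)
  have S2: "p permutes U \<and> p a = b" if "p \<in> S2" for p
    using that transpose_comp_block_perms[OF fin disj ab] unfolding S2_def U_def \<tau>_def by blast
  have S1: "p permutes U \<and> p a \<in> U1" if "p \<in> S1" for p
    using that ab(1) unfolding S1_def U_def mem_block_perms_iff[OF fin disj] by auto
  have disj12: "S1 \<inter> S2 = {}" using S1 S2 ab(2) disj by blast
  have vanish: "leibniz_term U A p = 0" if p: "p permutes U" "p \<notin> S1 \<union> S2" for p
  proof (rule ccontr)
    assume "leibniz_term U A p \<noteq> 0"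
    then have "p \<in> S1 \<or> \<tau> \<circ> p \<in> block_perms (U1 - {a}) (U2 - {b})"
      using nonzero_leibniz_term_cases[where A = A, OF fin disj ab zero] p(1) unfolding S1_def \<tau>_def U_def by blast
    moreover have "\<tau> \<circ> (\<tau> \<circ> p) = p" unfolding \<tau>_def by (simp add: fun_eq_iff)
    ultimately show False using p(2) unfolding S2_def by (metis UnCI image_eqI)
  qed
  have "charpoly U A = sum (leibniz_term U A) (S1 \<union> S2)"
    unfolding charpoly_eq_sum_leibniz_term
    by (rule sum.mono_neutral_right) (use finU S1 S2 vanish in auto)
  also have "\<dots> = sum (leibniz_term U A) S1 + sum (leibniz_term U A) S2"
    by (rule sum.union_disjoint) (use finite_subset[OF _ finU] S1 S2 disj12 in auto)
  also have "sum (leibniz_term U A) S1 = charpoly U1 A * charpoly U2 A"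
    unfolding S1_def U_def using charpoly_mult_eq_sum_block_perms[OF fin disj] by simp
  also have "sum (leibniz_term U A) S2 = - [:A a b * A b a:] * (charpoly (U1 - {a}) A * charpoly (U2 - {b}) A)"
    unfolding S2_def U_def \<tau>_def by (rule sum_leibniz_term_transpose_block_perms[OF fin disj ab])
  finally show ?thesis unfolding U_def by simp
qed

lemma charpoly_union_disconnected:
  fixes A :: "'a \<Rightarrow> 'a \<Rightarrow> real"
  assumes fin: "finite U1" "finite U2" and disj: "U1 \<inter> U2 = {}"
    and zero: "\<And>i j. i \<in> U1 \<Longrightarrow> j \<in> U2 \<Longrightarrow> A i j = 0 \<and> A j i = 0"
  shows "charpoly (U1 \<union> U2) A = charpoly U1 A * charpoly U2 A"
proof (cases "U1 = {} \<or> U2 = {}")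
  case False
  then obtain a b where ab: "a \<in> U1" "b \<in> U2" by blast
  then have "A a b = 0" using zero by blast
  then show ?thesis using charpoly_union_edge[OF fin disj ab] zero by simp
qed auto

section \<open>Tridiagonal matrices on a path\<close>
lemma charpoly_path_recurrence:
  assumes C: "in_R (path_verts n) path_adj C" and k: "k + 2 \<le> n"
  shows "charpoly {k+1..n} C =
    [:- C (k+1) (k+1), 1:] * charpoly {k+2..n} C - [:C (k+1) (k+2) * C (k+2) (k+1):] * charpoly {k+3..n} C"
proof -
  have zero: "C i j = 0" if "i \<in> {1..n}" "j \<in> {1..n}" "i \<noteq> j" "\<not> path_adj i j" for i j
    using C that unfolding in_R_def path_verts_def by blast
  have "C i j = 0 \<and> C j i = 0" if "i \<in> {k+1}" "j \<in> {k+2..n}" "(i, j) \<noteq> (k+1, k+2)" for i j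
    using that k by (intro conjI zero) (auto simp: path_adj_def)
  then have "charpoly ({k+1} \<union> {k+2..n}) C = charpoly {k+1} C * charpoly {k+2..n} C
     - [:C (k+1) (k+2) * C (k+2) (k+1):] * (charpoly ({k+1} - {k+1}) C * charpoly ({k+2..n} - {k+2}) C)"
    using k by (intro charpoly_union_edge) auto
  moreover have "{k+1} \<union> {k+2..n} = {k+1..n}" "{k+2..n} - {k+2} = {k+3..n}" using k by auto
  ultimately show ?thesis by (simp add: charpoly_singleton)
qed

lemma degree_charpoly_path:
  assumes C: "in_R (path_verts n) path_adj C"
  shows "k \<le> n \<Longrightarrow> charpoly {k+1..n} C \<noteq> 0 \<and> Polynomial.degree (charpoly {k+1..n} C) = n - k"
proof (induction "n - k" arbitrary: k rule: less_induct)
  case less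
  show ?case
  proof (cases "k + 2 \<le> n")
    case False
    then have "k = n \<or> k + 1 = n" using less.prems by auto
    then show ?thesis by (auto simp: charpoly_singleton)
  next
    case True
    let ?L = "[:- C (k+1) (k+1), 1:] * charpoly {k+2..n} C"
    let ?R = "[:C (k+1) (k+2) * C (k+2) (k+1):] * charpoly {k+3..n} C"
    have IH: "charpoly {k+2..n} C \<noteq> 0" "Polynomial.degree (charpoly {k+2..n} C) = n - k - 1"
      "Polynomial.degree (charpoly {k+3..n} C) = n - k - 2"
      using less.hyps[of "k+1"] less.hyps[of "k+2"] True by (auto simp: eval_nat_numeral)
    have "Polynomial.degree ?L = n - k" using IH True by (subst degree_mult_eq) auto
    moreover have "Polynomial.degree ?R < n - k" using IH True by (auto intro: le_less_trans[OF degree_smult_le])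
    ultimately have "Polynomial.degree (?L + - ?R) = n - k"
      using degree_add_eq_left[of "- ?R" ?L] by (simp only: degree_minus)
    then show ?thesis
      unfolding charpoly_path_recurrence[OF C True] diff_conv_add_uminus using True by auto
  qed
qed

section \<open>Counting roots with multiplicity\<close>

lemma map_poly_of_real_mult:
  "map_poly complex_of_real (p * q) = map_poly complex_of_real p * map_poly complex_of_real q"
  by (rule poly_eqI) (simp add: coeff_map_poly coeff_mult)

lemma map_poly_of_real_prod:
  "map_poly complex_of_real (\<Prod>x\<in>S. f x) = (\<Prod>x\<in>S. map_poly complex_of_real (f x))"
  by (induction S rule: infinite_finite_induct) (simp_all add: map_poly_of_real_mult)

lemma sum_constant_repeat_mset: "finite S \<Longrightarrow> (\<Sum>x\<in>S. M) = repeat_mset (card S) M"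
  by (induction S rule: finite_induct) auto

lemma sum_repeat_mset_cancel:
  assumes "\<And>i. i \<in> I \<Longrightarrow> m i \<le> n i"
    and "X + (\<Sum>i\<in>I. repeat_mset (m i) (M i)) = (\<Sum>i\<in>I. repeat_mset (n i) (M i))"
  shows "X = (\<Sum>i\<in>I. repeat_mset (n i - m i) (M i))"
proof -
  have "(\<Sum>i\<in>I. repeat_mset (n i) (M i)) =
      (\<Sum>i\<in>I. repeat_mset (n i - m i) (M i)) + (\<Sum>i\<in>I. repeat_mset (m i) (M i))"
    unfolding sum.distrib[symmetric] repeat_mset_distrib[symmetric] using assms(1) by simp
  then show ?thesis using assms(2) by simp
qed

section \<open>Rooted trees and hedges\<close>

lemma walk_len_0 [simp]: "walk_len adj 0 u v \<longleftrightarrow> u = v"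
  by (simp add: walk_len_def)

lemma walk_len_Suc: "walk_len adj (Suc n) u v \<longleftrightarrow> (\<exists>w. walk_len adj n u w \<and> adj w v)"
  by (simp add: walk_len_def relcompp_apply)

lemma walk_len_Suc_left: "walk_len adj (Suc n) u v \<longleftrightarrow> (\<exists>w. adj u w \<and> walk_len adj n w v)"
  unfolding walk_len_def relpowp_Suc_left by (simp add: relcompp_apply)

lemma walk_len_add: "walk_len adj m u v \<Longrightarrow> walk_len adj n v w \<Longrightarrow> walk_len adj (m + n) u w"
  unfolding walk_len_def relpowp_add by (auto simp: relcompp_apply)

lemma gdist_le: "walk_len adj n u v \<Longrightarrow> gdist adj u v \<le> n"
  unfolding gdist_def by (rule Least_le)

lemma walk_len_gdist: "\<exists>n. walk_len adj n u v \<Longrightarrow> walk_len adj (gdist adj u v) u v"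
  unfolding gdist_def by (rule LeastI_ex)

lemma gdist_self [simp]: "gdist adj u u = 0"
  using gdist_le[of adj 0 u u] by simp

locale hedge =
  fixes V :: "'a set" and adj :: "'a \<Rightarrow> 'a \<Rightarrow> bool" and r :: 'a
  assumes is_hedge: "is_hedge V adj r"
begin

lemma finite_V: "finite V" and root_in_V: "r \<in> V" and adj_in_V: "adj u v \<Longrightarrow> u \<in> V \<and> v \<in> V"
  and adj_sym: "adj u v \<Longrightarrow> adj v u" and adj_irrefl: "\<not> adj u u"
  and connected: "u \<in> V \<Longrightarrow> v \<in> V \<Longrightarrow> \<exists>n. walk_len adj n u v"
  and card_edges: "card (graph_edges V adj) + 1 = card V"
  using is_hedge unfolding is_hedge_def is_tree_def is_graph_def connected_graph_def by blast+

definition depth :: "'a \<Rightarrow> nat" where "depth v = gdist adj r v"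

lemma walk_len_depth: "v \<in> V \<Longrightarrow> walk_len adj (depth v) r v"
  unfolding depth_def by (rule walk_len_gdist[OF connected[OF root_in_V]])

lemma depth_root [simp]: "depth r = 0"
  unfolding depth_def by simp

lemma depth_eq_0_imp_root: "v \<in> V \<Longrightarrow> depth v = 0 \<Longrightarrow> v = r"
  using walk_len_depth by fastforce

lemma gdist_adj: "adj u v \<Longrightarrow> gdist adj u v = 1"
proof -
  assume a: "adj u v"
  have "walk_len adj 1 u v" using a by (simp add: walk_len_Suc)
  then have "gdist adj u v \<le> 1" by (rule gdist_le)
  moreover have "walk_len adj (gdist adj u v) u v"
    using a adj_in_V by (intro walk_len_gdist connected) auto
  then have "gdist adj u v \<noteq> 0" using a adj_irrefl by (cases "gdist adj u v") auto
  ultimately show ?thesis by simp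
qed

lemma depth_le_depth_plus_gdist: "v \<in> V \<Longrightarrow> w \<in> V \<Longrightarrow> depth w \<le> depth v + gdist adj v w"
proof -
  assume "v \<in> V" "w \<in> V"
  have "walk_len adj (depth v + gdist adj v w) r w"
    using walk_len_add[OF walk_len_depth[OF \<open>v \<in> V\<close>] walk_len_gdist[OF connected[OF \<open>v \<in> V\<close> \<open>w \<in> V\<close>]]] .
  then show ?thesis unfolding depth_def by (rule gdist_le)
qed

lemma depth_adj_le: "adj x y \<Longrightarrow> depth y \<le> depth x + 1"
  using depth_le_depth_plus_gdist[of x y] gdist_adj[of x y] adj_in_V[of x y] by simp

lemma parent_exists: "v \<in> V \<Longrightarrow> v \<noteq> r \<Longrightarrow> \<exists>x. adj x v \<and> depth x + 1 = depth v"
proof -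
  assume v: "v \<in> V" "v \<noteq> r"
  then have "depth v \<noteq> 0" using depth_eq_0_imp_root by blast
  then obtain m where m: "depth v = Suc m" using not0_implies_Suc by blast
  then obtain w where w: "walk_len adj m r w" "adj w v"
    using walk_len_depth[OF v(1)] walk_len_Suc[of adj m r v] by auto
  have "depth w \<le> m" unfolding depth_def using gdist_le w(1) .
  moreover have "depth v \<le> depth w + 1" using depth_adj_le w(2) .
  ultimately show ?thesis using w(2) m by (intro exI[of _ w]) simp
qed

definition parent :: "'a \<Rightarrow> 'a" where "parent v = (SOME x. adj x v \<and> depth x + 1 = depth v)"

lemma adj_parent: "v \<in> V \<Longrightarrow> v \<noteq> r \<Longrightarrow> adj (parent v) v"
  and depth_parent: "v \<in> V \<Longrightarrow> v \<noteq> r \<Longrightarrow> depth (parent v) + 1 = depth v"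
  unfolding parent_def using someI_ex[OF parent_exists] by blast+

lemma parent_in_V: "v \<in> V \<Longrightarrow> v \<noteq> r \<Longrightarrow> parent v \<in> V"
  using adj_parent adj_in_V by blast

text \<open>In a tree the |V| - 1 edges {parent v, v} are all the edges, so every edge joins a vertex to
  its parent.\<close>

lemma graph_edges_eq_parent_edges: "graph_edges V adj = (\<lambda>v. {parent v, v}) ` (V - {r})"
proof -
  let ?f = "\<lambda>v. {parent v, v}"
  have "inj_on ?f (V - {r})"
  proof (rule inj_onI)
    fix v w assume vw: "v \<in> V - {r}" "w \<in> V - {r}" "{parent v, v} = {parent w, w}"
    then have "(parent v = parent w \<and> v = w) \<or> (parent v = w \<and> v = parent w)"
      by (simp add: doubleton_eq_iff)
    then show "v = w" using depth_parent[of v] depth_parent[of w] vw(1,2) by auto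
  qed
  then have "card (?f ` (V - {r})) = card (graph_edges V adj)"
    using card_image root_in_V finite_V card_edges by fastforce
  moreover have "?f ` (V - {r}) \<subseteq> graph_edges V adj"
    unfolding graph_edges_def using adj_parent parent_in_V by blast
  moreover have "finite (graph_edges V adj)"
  proof -
    have "graph_edges V adj \<subseteq> (\<lambda>(u, v). {u, v}) ` (V \<times> V)" unfolding graph_edges_def by auto
    then show ?thesis using finite_subset finite_V by blast
  qed
  ultimately show ?thesis using card_subset_eq by metis
qed

lemma adj_cases: "adj x y \<Longrightarrow> (y \<in> V \<and> y \<noteq> r \<and> x = parent y) \<or> (x \<in> V \<and> x \<noteq> r \<and> y = parent x)"
proof -
  assume "adj x y"
  then have "{x, y} \<in> graph_edges V adj" unfolding graph_edges_def using adj_in_V by blast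
  then obtain v where "v \<in> V - {r}" "{x, y} = {parent v, v}" using graph_edges_eq_parent_edges by blast
  then show ?thesis by (auto simp: doubleton_eq_iff)
qed

lemma eq_parentI: "adj x v \<Longrightarrow> depth x + 1 = depth v \<Longrightarrow> x = parent v"
  using adj_cases depth_parent by fastforce

definition children :: "'a \<Rightarrow> 'a set" where "children v = {y \<in> V. y \<noteq> r \<and> parent y = v}"

lemma depth_child: "y \<in> children v \<Longrightarrow> depth y = depth v + 1"
  unfolding children_def using depth_parent by auto

lemma children_subset: "children v \<subseteq> V"
  unfolding children_def by auto

lemma finite_children: "finite (children v)"
  using finite_subset[OF children_subset finite_V] .

lemma is_child_iff: "is_child adj r y z \<longleftrightarrow> y \<in> children z"
proof
  assume "is_child adj r y z"
  then have a: "adj y z" and d: "depth y = depth z + 1"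
    unfolding is_child_def depth_def using gdist_adj adj_sym by auto
  then have "y \<in> V" "y \<noteq> r" using adj_in_V by auto
  moreover have "z = parent y" using eq_parentI adj_sym[OF a] d by simp
  ultimately show "y \<in> children z" unfolding children_def by simp
next
  assume "y \<in> children z"
  then have "adj z y" "depth z + 1 = depth y" unfolding children_def using adj_parent depth_parent by auto
  then show "is_child adj r y z" unfolding is_child_def depth_def using gdist_adj adj_sym by auto
qed

abbreviation ancestor :: "nat \<Rightarrow> 'a \<Rightarrow> 'a" where "ancestor k w \<equiv> (parent ^^ k) w"

lemma ancestor_in_V_depth:
  "w \<in> V \<Longrightarrow> k \<le> depth w \<Longrightarrow> ancestor k w \<in> V \<and> depth (ancestor k w) = depth w - k"
proof (induction k)
  case (Suc k)
  then have "ancestor k w \<in> V" "depth (ancestor k w) = depth w - k" "ancestor k w \<noteq> r" by auto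
  then show ?case using parent_in_V depth_parent Suc.prems by fastforce
qed simp

lemma children_root_nonempty: "V \<noteq> {r} \<Longrightarrow> children r \<noteq> {}"
proof -
  assume "V \<noteq> {r}"
  then obtain w where w: "w \<in> V" "w \<noteq> r" using root_in_V by blast
  then have "depth w \<ge> 1" using depth_eq_0_imp_root by (metis less_one not_le)
  then have c: "ancestor (depth w - 1) w \<in> V" "depth (ancestor (depth w - 1) w) = 1"
    using ancestor_in_V_depth[OF w(1), of "depth w - 1"] by auto
  then have "ancestor (depth w - 1) w \<noteq> r" by auto
  moreover have "parent (ancestor (depth w - 1) w) = r"
    using c calculation depth_parent[of "ancestor (depth w - 1) w"]
      parent_in_V[of "ancestor (depth w - 1) w"] depth_eq_0_imp_root by simp
  ultimately show ?thesis using c(1) unfolding children_def by blast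
qed

lemma is_leaf_iff: "is_leaf V adj r v \<longleftrightarrow> v \<in> V \<and> children v = {}"
proof (cases "V = {r}")
  case True
  then show ?thesis using children_subset unfolding is_leaf_def children_def by auto
next
  case nontrivial: False
  show ?thesis
  proof (cases "v \<in> V \<and> v \<noteq> r")
    case True
    have "{u \<in> V. adj v u} = insert (parent v) (children v)"
    proof (intro set_eqI iffI)
      fix u assume "u \<in> {u \<in> V. adj v u}"
      then show "u \<in> insert (parent v) (children v)"
        using adj_cases[of v u] unfolding children_def by auto
    next
      fix u assume "u \<in> insert (parent v) (children v)"
      then show "u \<in> {u \<in> V. adj v u}"
        using adj_parent[of v] adj_parent[of u] parent_in_V[of v] True adj_sym
        unfolding children_def by auto
    qed
    moreover have "parent v \<notin> children v" using depth_child depth_parent True by fastforce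
    ultimately have "degree V adj v = Suc (card (children v))"
      unfolding degree_def using finite_children by simp
    then show ?thesis using nontrivial True unfolding is_leaf_def using finite_children by auto
  next
    case False
    then show ?thesis using nontrivial children_root_nonempty unfolding is_leaf_def by auto
  qed
qed

definition subtree :: "'a \<Rightarrow> 'a set" where
  "subtree u = {w \<in> V. depth u \<le> depth w \<and> ancestor (depth w - depth u) w = u}"

lemma subtree_subset: "subtree u \<subseteq> V"
  unfolding subtree_def by auto

lemma finite_subtree: "finite (subtree u)"
  using finite_subset[OF subtree_subset finite_V] .

lemma self_in_subtree: "u \<in> V \<Longrightarrow> u \<in> subtree u"
  unfolding subtree_def by simp

lemma depth_le_subtree: "w \<in> subtree u \<Longrightarrow> depth u \<le> depth w"
  unfolding subtree_def by simp

lemma child_in_subtree: "w \<in> subtree u \<Longrightarrow> y \<in> children w \<Longrightarrow> y \<in> subtree u"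
proof -
  assume w: "w \<in> subtree u" and y: "y \<in> children w"
  have "depth y - depth u = Suc (depth w - depth u)"
    using depth_child[OF y] depth_le_subtree[OF w] by simp
  then have "ancestor (depth y - depth u) y = ancestor (depth w - depth u) (parent y)"
    by (simp only: funpow_Suc_right o_apply)
  then show ?thesis using w y children_subset depth_child[OF y] unfolding subtree_def children_def by auto
qed

lemma parent_in_subtree: "w \<in> subtree u \<Longrightarrow> w \<noteq> u \<Longrightarrow> w \<noteq> r \<and> parent w \<in> subtree u"
proof -
  assume w: "w \<in> subtree u" "w \<noteq> u"
  then have wV: "w \<in> V" and lt: "depth u < depth w"
    using subtree_subset depth_le_subtree unfolding subtree_def by (auto simp: le_less)
  then have wr: "w \<noteq> r" by auto
  have "depth w - depth u = Suc (depth (parent w) - depth u)"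
    using depth_parent[OF wV wr] lt by simp
  then have "ancestor (depth (parent w) - depth u) (parent w) = ancestor (depth w - depth u) w"
    by (simp only: funpow_Suc_right o_apply)
  then show ?thesis
    using w wr lt depth_parent[OF wV wr] parent_in_V[OF wV wr] unfolding subtree_def by auto
qed

lemma adj_subtree_cases:
  assumes "w \<in> subtree u" "adj w x"
  shows "x \<in> subtree u \<or> (w = u \<and> u \<noteq> r \<and> x = parent u)"
  using adj_cases[OF assms(2)]
proof
  assume "x \<in> V \<and> x \<noteq> r \<and> w = parent x"
  then have "x \<in> children w" unfolding children_def by simp
  then show ?thesis using child_in_subtree assms(1) by blast
next
  assume "w \<in> V \<and> w \<noteq> r \<and> x = parent w"
  then show ?thesis using parent_in_subtree[OF assms(1)] by (cases "w = u") auto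
qed

lemma subtree_eq_insert_children: "u \<in> V \<Longrightarrow> subtree u = insert u (\<Union>c\<in>children u. subtree c)"
proof (intro set_eqI iffI)
  fix w assume u: "u \<in> V" and w: "w \<in> subtree u"
  show "w \<in> insert u (\<Union>c\<in>children u. subtree c)"
  proof (cases "w = u")
    case False
    have wV: "w \<in> V" using w subtree_subset by blast
    have lt: "depth u < depth w"
      using w False depth_le_subtree[OF w] unfolding subtree_def by (auto simp: le_less)
    define c where "c = ancestor (depth w - depth u - 1) w"
    have c: "c \<in> V" "depth c = depth u + 1"
      unfolding c_def using ancestor_in_V_depth[OF wV, of "depth w - depth u - 1"] lt by auto
    have "parent c = ancestor (Suc (depth w - depth u - 1)) w" unfolding c_def by simp
    also have "Suc (depth w - depth u - 1) = depth w - depth u" using lt by simp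
    finally have "c \<in> children u" using w c unfolding subtree_def children_def by auto
    moreover have "w \<in> subtree c" using wV c lt unfolding subtree_def c_def by simp
    ultimately show ?thesis by blast
  qed simp
next
  fix w assume u: "u \<in> V" and w: "w \<in> insert u (\<Union>c\<in>children u. subtree c)"
  then show "w \<in> subtree u"
  proof (cases "w = u")
    case False
    then obtain c where c: "c \<in> children u" "w \<in> subtree c" using w by blast
    have "depth w - depth u = Suc (depth w - depth c)"
      using depth_child[OF c(1)] depth_le_subtree[OF c(2)] by simp
    then have "ancestor (depth w - depth u) w = parent (ancestor (depth w - depth c) w)" by simp
    then show ?thesis
      using c depth_child[OF c(1)] depth_le_subtree[OF c(2)] unfolding subtree_def children_def by auto
  qed (simp add: self_in_subtree)
qed

lemma subtrees_disjoint: "c \<in> children u \<Longrightarrow> c' \<in> children u \<Longrightarrow> c \<noteq> c' \<Longrightarrow> subtree c \<inter> subtree c' = {}"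
  using depth_child unfolding subtree_def by force

lemma notin_subtree_child: "c \<in> children u \<Longrightarrow> u \<notin> subtree c"
  using depth_child depth_le_subtree by fastforce

lemma subtree_root: "subtree r = V"
proof (intro set_eqI iffI)
  fix w assume "w \<in> V"
  then have "ancestor (depth w) w = r" using ancestor_in_V_depth[of w "depth w"] depth_eq_0_imp_root by simp
  then show "w \<in> subtree r" using \<open>w \<in> V\<close> unfolding subtree_def by simp
qed (use subtree_subset in auto)

lemma walk_len_ancestor: "w \<in> V \<Longrightarrow> k \<le> depth w \<Longrightarrow> walk_len adj k (ancestor k w) w"
proof (induction k)
  case (Suc k)
  then have "ancestor k w \<in> V" "ancestor k w \<noteq> r"
    using ancestor_in_V_depth[of w k] by auto
  then show ?case using Suc adj_parent unfolding walk_len_Suc_left by auto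
qed simp

lemma gdist_subtree_le: "w \<in> subtree v \<Longrightarrow> gdist adj v w \<le> depth w - depth v"
  using walk_len_ancestor[of w "depth w - depth v"] gdist_le unfolding subtree_def by force

lemma exists_leaf_in_subtree: "v \<in> V \<Longrightarrow> \<exists>w \<in> subtree v. children w = {}"
proof -
  assume "v \<in> V"
  then have ne: "depth ` subtree v \<noteq> {}" using self_in_subtree by blast
  obtain w where w: "w \<in> subtree v" "depth w = Max (depth ` subtree v)"
    using Max_in[OF finite_imageI[OF finite_subtree] ne] by auto
  have "children w = {}"
  proof
    show "children w \<subseteq> {}"
    proof
      fix c assume "c \<in> children w"
      then have "depth c \<le> depth w" using w child_in_subtree finite_subtree by auto
      then show "c \<in> {}" using depth_child[OF \<open>c \<in> children w\<close>] by simp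
    qed
  qed simp
  then show ?thesis using w(1) by blast
qed

definition leaf_depth :: nat where "leaf_depth = depth (SOME w. w \<in> V \<and> children w = {})"

lemma depth_leaf: "v \<in> V \<Longrightarrow> children v = {} \<Longrightarrow> depth v = leaf_depth"
proof -
  assume v: "v \<in> V" "children v = {}"
  define w where "w = (SOME w. w \<in> V \<and> children w = {})"
  have "\<exists>w. w \<in> V \<and> children w = {}" using exists_leaf_in_subtree[OF root_in_V] subtree_subset by blast
  then have w: "w \<in> V \<and> children w = {}" unfolding w_def by (rule someI_ex)
  then have w: "w \<in> V" "children w = {}" by auto
  show ?thesis
  proof (cases "V = {r}")
    case True then show ?thesis using v w unfolding leaf_depth_def w_def[symmetric] by auto
  next
    case False
    then have "gdist adj r v = gdist adj r w"
      using is_hedge v w is_leaf_iff unfolding is_hedge_def by blast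
    then show ?thesis unfolding leaf_depth_def w_def[symmetric] depth_def .
  qed
qed

lemma depth_le_leaf_depth: "v \<in> V \<Longrightarrow> depth v \<le> leaf_depth"
  using exists_leaf_in_subtree depth_leaf subtree_subset depth_le_subtree by fastforce

lemma children_nonempty: "v \<in> V \<Longrightarrow> depth v < leaf_depth \<Longrightarrow> children v \<noteq> {}"
  using depth_leaf by fastforce

lemma depth_less_leaf_depth: "c \<in> children v \<Longrightarrow> depth v < leaf_depth"
  using depth_child[of c v] depth_le_leaf_depth[of c] children_subset by fastforce

lemma vheight_eq: "v \<in> V \<Longrightarrow> vheight V adj r v = leaf_depth - depth v"
proof -
  assume v: "v \<in> V"
  let ?S = "{gdist adj v w |w. is_leaf V adj r w}"
  have fin: "finite ?S"
    using finite_subset[of ?S "gdist adj v ` V"] finite_V is_leaf_iff by blast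
  have lb: "leaf_depth - depth v \<le> y" if "y \<in> ?S" for y
    using that depth_le_depth_plus_gdist[OF v] depth_leaf is_leaf_iff by fastforce
  obtain w where w: "w \<in> subtree v" "children w = {}" using exists_leaf_in_subtree[OF v] by blast
  then have "w \<in> V" "depth w = leaf_depth" using subtree_subset depth_leaf by auto
  then have "gdist adj v w = leaf_depth - depth v"
    using gdist_subtree_le[OF w(1)] depth_le_depth_plus_gdist[OF v \<open>w \<in> V\<close>] by simp
  then have mem: "leaf_depth - depth v \<in> ?S" using \<open>w \<in> V\<close> w(2) is_leaf_iff by force
  show ?thesis unfolding vheight_def by (rule Min_eqI[OF fin lb mem])
qed

lemma vheight_root: "vheight V adj r r = leaf_depth"
  using vheight_eq[OF root_in_V] by simp

lemma level_set_eq: "level_set V adj r j = {v \<in> V. depth v + j = leaf_depth}"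
  unfolding level_set_def using vheight_eq depth_le_leaf_depth by fastforce

lemma card_level_set_Suc_le: "card (level_set V adj r (Suc j)) \<le> card (level_set V adj r j)"
proof -
  have "level_set V adj r (Suc j) \<subseteq> parent ` level_set V adj r j"
  proof
    fix v assume "v \<in> level_set V adj r (Suc j)"
    then have v: "v \<in> V" "depth v + Suc j = leaf_depth" unfolding level_set_eq by auto
    then obtain c where c: "c \<in> children v" using children_nonempty by fastforce
    then have "c \<in> level_set V adj r j" "parent c = v"
      using depth_child[OF c] v children_subset unfolding level_set_eq children_def by auto
    then show "v \<in> parent ` level_set V adj r j" by blast
  qed
  moreover have "finite (level_set V adj r j)" unfolding level_set_def using finite_V by simp
  ultimately show ?thesis using card_mono card_image_le order_trans by (metis finite_imageI)
qed

lemma sum_vheight_eq_sum_levels: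
  fixes f :: "nat \<Rightarrow> 'b multiset"
  shows "(\<Sum>w\<in>V. f (vheight V adj r w)) = (\<Sum>j=0..leaf_depth. repeat_mset (card (level_set V adj r j)) (f j))"
proof -
  have "(\<Sum>w\<in>V. f (vheight V adj r w)) =
      (\<Sum>j=0..leaf_depth. \<Sum>w\<in>level_set V adj r j. f (vheight V adj r w))"
    unfolding level_set_def
    by (rule sum.group[symmetric]) (use finite_V vheight_eq in auto)
  also have "\<dots> = (\<Sum>j=0..leaf_depth. repeat_mset (card (level_set V adj r j)) (f j))"
    using finite_V unfolding level_set_def by (simp add: sum_constant_repeat_mset)
  finally show ?thesis .
qed

end

section \<open>Matrices built by the path-to-hedge construction\<close>

text \<open>In quotient form: if G/F = L - \<sigma> P2/P1 and Y/Y' = P1/P2, then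
  (Y G - x Y' F)/(Y F) = L - (\<sigma> + x) P2/P1. This is how the quotient of characteristic polynomials
  at a vertex changes when one more child subtree is attached.\<close>

lemma continued_fraction_step:
  fixes G Y Y' F L P1 P2 :: "real poly"
  assumes "P1 \<noteq> 0" and "G * P1 = (L * P1 - [:\<sigma>:] * P2) * F" and "Y * P2 = P1 * Y'"
  shows "(Y * G - [:x:] * (Y' * F)) * P1 = (L * P1 - [:\<sigma> + x:] * P2) * (Y * F)"
proof -
  have "(Y * G - [:x:] * (Y' * F)) * P1 * P1 = Y * P1 * (G * P1) - [:x:] * F * P1 * (P1 * Y')"
    by (simp add: algebra_simps)
  also have "\<dots> = Y * P1 * ((L * P1 - [:\<sigma>:] * P2) * F) - [:x:] * F * P1 * (Y * P2)"
    using assms(2,3) by simp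
  also have "\<dots> = (L * P1 - [:\<sigma> + x:] * P2) * (Y * F) * P1"
    by (simp add: algebra_simps smult_add_left)
  finally show ?thesis using assms(1) by simp
qed

locale hedge_matrix = hedge V adj r for V :: "'a set" and adj r +
  fixes C :: "nat \<Rightarrow> nat \<Rightarrow> real" and A :: "'a \<Rightarrow> 'a \<Rightarrow> real"
  assumes C_path: "in_R (path_verts (leaf_depth + 1)) path_adj C"
    and A_PH: "A \<in> PH V adj r C"
begin

abbreviation tail_charpoly :: "nat \<Rightarrow> real poly" where
  "tail_charpoly k \<equiv> charpoly {k+1..leaf_depth+1} C"

lemma tail_charpoly_nonzero: "k \<le> leaf_depth + 1 \<Longrightarrow> tail_charpoly k \<noteq> 0"
  using degree_charpoly_path[OF C_path] by blast

lemma PH_index: "v \<in> V \<Longrightarrow> vheight V adj r r + 1 - vheight V adj r v = depth v + 1"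
  using vheight_eq vheight_root depth_le_leaf_depth by simp

lemma diag_A: "v \<in> V \<Longrightarrow> A v v = C (depth v + 1) (depth v + 1)"
  using A_PH PH_index unfolding PH_def Let_def by force

lemma sum_children_A: "v \<in> V \<Longrightarrow> children v \<noteq> {} \<Longrightarrow>
   (\<Sum>u\<in>children v. A v u * A u v) = C (depth v + 1) (depth v + 2) * C (depth v + 2) (depth v + 1)"
proof -
  assume v: "v \<in> V" "children v \<noteq> {}"
  have "{u. u \<in> V \<and> is_child adj r u v} = children v"
    using is_child_iff children_subset by auto
  moreover have "\<not> is_leaf V adj r v" using v is_leaf_iff by simp
  ultimately show ?thesis
    using A_PH v PH_index[OF v(1)] unfolding PH_def Let_def by (auto simp: numeral_2_eq_2)
qed

lemma A_eq_0_if_not_adj: "i \<in> V \<Longrightarrow> j \<in> V \<Longrightarrow> i \<noteq> j \<Longrightarrow> \<not> adj i j \<Longrightarrow> A i j = 0"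
  using A_PH unfolding PH_def Let_def in_R_def by blast

lemma A_eq_0_across_subtree:
  assumes c: "c \<in> children u" and i: "i \<in> subtree c" and j: "j \<in> V" "j \<notin> subtree c"
    and not_edge: "(i, j) \<noteq> (c, u)"
  shows "A i j = 0 \<and> A j i = 0"
proof -
  have "\<not> adj i j"
    using adj_subtree_cases[OF i] j not_edge c unfolding children_def by auto
  moreover have "i \<in> V" "i \<noteq> j" using i j subtree_subset by auto
  ultimately show ?thesis using A_eq_0_if_not_adj j adj_sym by metis
qed

lemma charpoly_Union_subtrees:
  "S \<subseteq> children u \<Longrightarrow> charpoly (\<Union>(subtree ` S)) A = (\<Prod>c\<in>S. charpoly (subtree c) A)"
proof (induction S rule: infinite_finite_induct)
  case (infinite S) then show ?case using finite_subset[OF _ finite_children] by blast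
next
  case (insert c S)
  have c: "c \<in> children u" "S \<subseteq> children u" using insert.prems by auto
  have disj: "subtree c \<inter> \<Union>(subtree ` S) = {}"
    using subtrees_disjoint[OF c(1)] c(2) insert.hyps(2) by blast
  have "charpoly (subtree c \<union> \<Union>(subtree ` S)) A = charpoly (subtree c) A * charpoly (\<Union>(subtree ` S)) A"
  proof (rule charpoly_union_disconnected[OF finite_subtree _ disj])
    show "finite (\<Union>(subtree ` S))" using insert.hyps(1) finite_subtree by blast
    fix i j assume "i \<in> subtree c" "j \<in> \<Union>(subtree ` S)"
    moreover have "j \<noteq> u" using \<open>j \<in> \<Union>(subtree ` S)\<close> notin_subtree_child c(2) by blast
    ultimately show "A i j = 0 \<and> A j i = 0"
      using A_eq_0_across_subtree[OF c(1)] disj subtree_subset by blast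
  qed
  then show ?case using insert c by simp
qed simp

lemma charpoly_subtree_minus_root:
  "c \<in> V \<Longrightarrow> charpoly (subtree c - {c}) A = (\<Prod>g\<in>children c. charpoly (subtree g) A)"
  using subtree_eq_insert_children[of c] notin_subtree_child charpoly_Union_subtrees[of "children c" c]
  by (metis Diff_insert_absorb UN_iff order_refl)

lemma charpoly_insert_subtrees:
  assumes u: "u \<in> V"
    and child: "\<And>c. c \<in> children u \<Longrightarrow>
      charpoly (subtree c) A * tail_charpoly (depth u + 2) = tail_charpoly (depth u + 1) * charpoly (subtree c - {c}) A"
  shows "S \<subseteq> children u \<Longrightarrow> charpoly (insert u (\<Union>(subtree ` S))) A * tail_charpoly (depth u + 1) =
     ([:- A u u, 1:] * tail_charpoly (depth u + 1) - [:\<Sum>c\<in>S. A u c * A c u:] * tail_charpoly (depth u + 2))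
     * (\<Prod>c\<in>S. charpoly (subtree c) A)"
proof (induction S rule: infinite_finite_induct)
  case (infinite S) then show ?case using finite_subset[OF _ finite_children] by blast
next
  case empty then show ?case by (simp add: charpoly_singleton)
next
  case (insert c S)
  have c: "c \<in> children u" "S \<subseteq> children u" using insert.prems by auto
  define X where "X = insert u (\<Union>(subtree ` S))"
  have X: "finite X" "u \<in> X" "X \<subseteq> V" "X - {u} = \<Union>(subtree ` S)"
    unfolding X_def using insert.hyps(1) finite_subtree u subtree_subset notin_subtree_child c(2) by auto
  have disj: "subtree c \<inter> X = {}"
    unfolding X_def using subtrees_disjoint[OF c(1)] c(2) insert.hyps(2) notin_subtree_child[OF c(1)] by blast
  have cut: "charpoly (subtree c \<union> X) A = charpoly (subtree c) A * charpoly X A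
     - [:A c u * A u c:] * (charpoly (subtree c - {c}) A * charpoly (X - {u}) A)"
  proof (rule charpoly_union_edge[OF finite_subtree X(1) disj])
    show "c \<in> subtree c" using self_in_subtree c(1) children_subset by blast
    fix i j assume "i \<in> subtree c" "j \<in> X" "(i, j) \<noteq> (c, u)"
    then show "A i j = 0 \<and> A j i = 0" using A_eq_0_across_subtree[OF c(1)] X(3) disj by blast
  qed fact
  have rest: "charpoly (X - {u}) A = (\<Prod>c\<in>S. charpoly (subtree c) A)"
    unfolding X(4) using charpoly_Union_subtrees[OF c(2)] .
  have IH: "charpoly X A * tail_charpoly (depth u + 1) =
     ([:- A u u, 1:] * tail_charpoly (depth u + 1) - [:\<Sum>c\<in>S. A u c * A c u:] * tail_charpoly (depth u + 2))
     * charpoly (X - {u}) A"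
    using insert.IH c(2) rest unfolding X_def by simp
  have "tail_charpoly (depth u + 1) \<noteq> 0"
    using tail_charpoly_nonzero depth_less_leaf_depth[OF c(1)] by simp
  from continued_fraction_step[OF this IH child[OF c(1)], of "A u c * A c u"]
  have "charpoly (subtree c \<union> X) A * tail_charpoly (depth u + 1) =
      ([:- A u u, 1:] * tail_charpoly (depth u + 1)
        - [:(\<Sum>c\<in>S. A u c * A c u) + A u c * A c u:] * tail_charpoly (depth u + 2))
      * (charpoly (subtree c) A * charpoly (X - {u}) A)"
    unfolding cut by (simp add: mult.commute)
  moreover have "insert u (\<Union>(subtree ` insert c S)) = subtree c \<union> X" unfolding X_def by auto
  ultimately show ?case unfolding rest using insert.hyps by (simp add: add.commute)
qed

lemma charpoly_subtree_recurrence: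
  "u \<in> V \<Longrightarrow> charpoly (subtree u) A * tail_charpoly (depth u + 1) =
    tail_charpoly (depth u) * (\<Prod>c\<in>children u. charpoly (subtree c) A)"
proof (induction "leaf_depth - depth u" arbitrary: u rule: less_induct)
  case less
  have u: "u \<in> V" using less.prems .
  have child: "charpoly (subtree c) A * tail_charpoly (depth u + 2) =
      tail_charpoly (depth u + 1) * charpoly (subtree c - {c}) A" if c: "c \<in> children u" for c
  proof -
    have cV: "c \<in> V" and dc: "depth c = depth u + 1" using c children_subset depth_child by auto
    then have "leaf_depth - depth c < leaf_depth - depth u" using depth_less_leaf_depth[OF c] by simp
    then have "charpoly (subtree c) A * tail_charpoly (depth c + 1) =
        tail_charpoly (depth c) * (\<Prod>g\<in>children c. charpoly (subtree g) A)"
      using less.hyps cV by blast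
    then show ?thesis unfolding charpoly_subtree_minus_root[OF cV] dc by (simp add: numeral_2_eq_2)
  qed
  have "charpoly (subtree u) A * tail_charpoly (depth u + 1) =
     ([:- A u u, 1:] * tail_charpoly (depth u + 1)
       - [:\<Sum>c\<in>children u. A u c * A c u:] * tail_charpoly (depth u + 2))
     * (\<Prod>c\<in>children u. charpoly (subtree c) A)"
    using charpoly_insert_subtrees[OF u child] subtree_eq_insert_children[OF u] by simp
  also have "[:- A u u, 1:] * tail_charpoly (depth u + 1)
       - [:\<Sum>c\<in>children u. A u c * A c u:] * tail_charpoly (depth u + 2) = tail_charpoly (depth u)"
  proof (cases "children u = {}")
    case True
    then show ?thesis using depth_leaf[OF u] diag_A[OF u] by (simp add: charpoly_singleton)
  next
    case False
    then have "depth u + 2 \<le> leaf_depth + 1" using depth_less_leaf_depth by fastforce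
    then show ?thesis
      using charpoly_path_recurrence[OF C_path] sum_children_A[OF u False] diag_A[OF u]
      by (simp add: eval_nat_numeral)
  qed
  finally show ?case .
qed

lemma charpoly_subtree_telescope:
  "u \<in> V \<Longrightarrow> charpoly (subtree u) A * (\<Prod>w\<in>subtree u. tail_charpoly (depth w + 1))
    = (\<Prod>w\<in>subtree u. tail_charpoly (depth w))"
proof (induction "leaf_depth - depth u" arbitrary: u rule: less_induct)
  case less
  have u: "u \<in> V" using less.prems .
  have prod_subtree: "(\<Prod>w\<in>subtree u. f w) = f u * (\<Prod>c\<in>children u. \<Prod>w\<in>subtree c. f w)"
    for f :: "'a \<Rightarrow> real poly"
  proof -
    have "(\<Prod>w\<in>\<Union>(subtree ` children u). f w) = (\<Prod>c\<in>children u. \<Prod>w\<in>subtree c. f w)"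
      by (rule prod.UNION_disjoint[OF finite_children]) (use finite_subtree subtrees_disjoint in auto)
    moreover have "u \<notin> \<Union>(subtree ` children u)" using notin_subtree_child by blast
    ultimately show ?thesis
      using subtree_eq_insert_children[OF u] finite_children finite_subtree by simp
  qed
  have IH: "charpoly (subtree c) A * (\<Prod>w\<in>subtree c. tail_charpoly (depth w + 1))
      = (\<Prod>w\<in>subtree c. tail_charpoly (depth w))" if c: "c \<in> children u" for c
    using less.hyps depth_child[OF c] depth_less_leaf_depth[OF c] c children_subset by fastforce
  have "charpoly (subtree u) A * (\<Prod>w\<in>subtree u. tail_charpoly (depth w + 1)) =
     (charpoly (subtree u) A * tail_charpoly (depth u + 1))
     * (\<Prod>c\<in>children u. \<Prod>w\<in>subtree c. tail_charpoly (depth w + 1))"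
    unfolding prod_subtree[of "\<lambda>w. tail_charpoly (depth w + 1)"] by (simp add: mult.assoc)
  also have "\<dots> = tail_charpoly (depth u) * (\<Prod>c\<in>children u.
      charpoly (subtree c) A * (\<Prod>w\<in>subtree c. tail_charpoly (depth w + 1)))"
    unfolding charpoly_subtree_recurrence[OF u] prod.distrib by (simp add: mult.assoc)
  also have "\<dots> = (\<Prod>w\<in>subtree u. tail_charpoly (depth w))"
    unfolding prod_subtree[of "\<lambda>w. tail_charpoly (depth w)"] using IH by simp
  finally show ?case .
qed

lemma charpoly_telescope:
  "charpoly V A * (\<Prod>w\<in>V. tail_charpoly (depth w + 1)) = (\<Prod>w\<in>V. tail_charpoly (depth w))"
  using charpoly_subtree_telescope[OF root_in_V] unfolding subtree_root .

text \<open>The spectrum of the j x j trailing block of C, i.e. of C_j in the statement; the factor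
  tail_charpoly (depth v) of a vertex v is the characteristic polynomial of C_(vheight v + 1).\<close>

abbreviation trailing_spectrum :: "nat \<Rightarrow> complex multiset" where
  "trailing_spectrum j \<equiv> spectrum_ms {leaf_depth + 2 - j..leaf_depth + 1} C"

lemma spectrum_telescope:
  "spectrum_ms V A + (\<Sum>w\<in>V. trailing_spectrum (vheight V adj r w))
    = (\<Sum>w\<in>V. trailing_spectrum (vheight V adj r w + 1))"
proof -
  let ?f = "map_poly complex_of_real"
  have nonzero: "?f (tail_charpoly (depth w)) \<noteq> 0" "?f (tail_charpoly (depth w + 1)) \<noteq> 0" if "w \<in> V" for w
    using tail_charpoly_nonzero depth_le_leaf_depth[OF that] by (auto simp: map_poly_eq_0_iff)
  have eq: "?f (charpoly V A) * (\<Prod>w\<in>V. ?f (tail_charpoly (depth w + 1))) = (\<Prod>w\<in>V. ?f (tail_charpoly (depth w)))"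
    using arg_cong[OF charpoly_telescope, of ?f] by (simp add: map_poly_of_real_mult map_poly_of_real_prod)
  have "(\<Prod>w\<in>V. ?f (tail_charpoly (depth w))) \<noteq> 0"
    using nonzero finite_V by (simp add: prod_zero_iff)
  then have "?f (charpoly V A) \<noteq> 0" using eq by auto
  moreover have "(\<Prod>w\<in>V. ?f (tail_charpoly (depth w + 1))) \<noteq> 0"
    using nonzero finite_V by (simp add: prod_zero_iff)
  ultimately have "spectrum_ms V A + (\<Sum>w\<in>V. proots (?f (tail_charpoly (depth w + 1))))
      = (\<Sum>w\<in>V. proots (?f (tail_charpoly (depth w))))"
    using arg_cong[OF eq, of proots] nonzero unfolding spectrum_ms_def by (simp add: proots_mult proots_prod)
  moreover have "leaf_depth + 2 - vheight V adj r w = depth w + 2"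
    "leaf_depth + 2 - (vheight V adj r w + 1) = depth w + 1" if "w \<in> V" for w
    using vheight_eq[OF that] depth_le_leaf_depth[OF that] by auto
  ultimately show ?thesis unfolding spectrum_ms_def by (simp add: eval_nat_numeral)
qed

lemma spectrum_eq_sum_levels:
  "spectrum_ms V A = (\<Sum>i\<in>{1..leaf_depth+1}. repeat_mset (nat (ell V adj r i)) (trailing_spectrum i))"
proof -
  define N where "N j = card (level_set V adj r j)" for j
  have N_top: "N (leaf_depth + 1) = 0" unfolding N_def level_set_eq by simp
  have "(\<Sum>j=0..leaf_depth. repeat_mset (N j) (trailing_spectrum j))
      = (\<Sum>i=1..leaf_depth+1. repeat_mset (N i) (trailing_spectrum i))"
    using N_top by (simp add: sum.atLeast_Suc_atMost spectrum_ms_def)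
  moreover have "(\<Sum>j=0..leaf_depth. repeat_mset (N j) (trailing_spectrum (j + 1)))
      = (\<Sum>i=1..leaf_depth+1. repeat_mset (N (i - 1)) (trailing_spectrum i))"
    using sum.shift_bounds_cl_Suc_ivl[of "\<lambda>i. repeat_mset (N (i - 1)) (trailing_spectrum i)" 0 leaf_depth]
    by simp
  ultimately have telescope: "spectrum_ms V A + (\<Sum>i=1..leaf_depth+1. repeat_mset (N i) (trailing_spectrum i))
      = (\<Sum>i=1..leaf_depth+1. repeat_mset (N (i - 1)) (trailing_spectrum i))"
    using spectrum_telescope
      sum_vheight_eq_sum_levels[of trailing_spectrum] sum_vheight_eq_sum_levels[of "\<lambda>j. trailing_spectrum (j + 1)"]
    unfolding N_def by simp
  have mono: "N i \<le> N (i - 1)" if "i \<in> {1..leaf_depth+1}" for i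
    using card_level_set_Suc_le[of "i - 1"] that unfolding N_def by simp
  then have "spectrum_ms V A = (\<Sum>i=1..leaf_depth+1. repeat_mset (N (i - 1) - N i) (trailing_spectrum i))"
    using telescope by (rule sum_repeat_mset_cancel)
  also have "\<dots> = (\<Sum>i=1..leaf_depth+1. repeat_mset (nat (ell V adj r i)) (trailing_spectrum i))"
  proof (rule sum.cong)
    fix i assume i: "i \<in> {1..leaf_depth+1}"
    have "nat (ell V adj r i) = N (i - 1) - N i" using mono[OF i] unfolding ell_def N_def by simp
    then show "repeat_mset (N (i - 1) - N i) (trailing_spectrum i) =
        repeat_mset (nat (ell V adj r i)) (trailing_spectrum i)" by simp
  qed simp
  finally show ?thesis .
qed

end

theorem mainTheorem3:
  fixes V :: "'a set" and adj :: "'a \<Rightarrow> 'a \<Rightarrow> bool" and r :: 'a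
    and C :: "nat \<Rightarrow> nat \<Rightarrow> real" and A :: "'a \<Rightarrow> 'a \<Rightarrow> real" and H :: nat
  assumes "is_hedge V adj r"
    and "H = vheight V adj r r"
    and "in_R (path_verts (H + 1)) path_adj C"
    and "A \<in> PH V adj r C"
  shows "spectrum_ms V A =
    (\<Sum>i\<in>{1..H+1}. repeat_mset (nat (ell V adj r i)) (spectrum_ms {H + 2 - i..H + 1} C))"
proof -
  interpret hedge V adj r by (rule hedge.intro) fact
  have H: "H = leaf_depth" using assms(2) vheight_root by simp
  interpret hedge_matrix V adj r C A by unfold_locales (use assms H in auto)
  show ?thesis using spectrum_eq_sum_levels unfolding H .
qed

end
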